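(* Let $C$ be a convex body in the plane accessible only through a separation oracle, and let $P$ be a set of $n$ points in the plane. The classification algorithm for reverse emptiness (described in the context) performs $O\bigl(|F_{\mathrm{in}}|\log n\bigr)$ oracle queries. The algorithm correctly verifies that $P\cap C=P$ or finds a witness point of $P$ outside $C$.
   Context: Separation oracle: given $q\in\mathbb{R}^2$, it either reports $q\in C$ or returns a line separating $q$ from $C$. The inner fence $F_{\mathrm{in}}$ of $P$ is a closed convex polygon with the minimum number of vertices such that $F_{\mathrm{in}}\subseteq C$ and $C\cap P=F_{\mathrm{in}}\cap P$; $|F_{\mathrm{in}}|$ denotes its number of vertices. Algorithm: let $D=\mathrm{CH}(P)$, let $v,v'\in P$ be the leftmost and rightmost vertices of $D$, and $v_1,v_2$ (resp. $v'_1,v'_2$) the vertices of $D$ adjacent to $v$ (resp. $v'$). Query these six points; if any is outside, halt and report it. Otherwise handle the points above the segment $vv'$ as follows (the points below are handled symmetrically). Let $D^+$ be the part of the boundary chain of $D$ above $vv'$ between the vertical lines through $v$ and $v'$, with edges $e_1,\dots,e_k$ in clockwise order from $v$ to $v'$; for $i<j$ let $D[i,j]$ be the chain of edges $e_i,\dots,e_j$. A recursive call $(i,j)$ (starting with $(1,k)$) must verify that the points of $P$ below $D[i,j]$ are in $C$: let $\ell_i,\ell_j$ be the lines through $e_i,e_j$ and $q=\ell_i\cap\ell_j$; query $q$. If $q\in C$, all points of $P$ below $D[i,j]$ are classified inside and the call returns. Otherwise let $m=\lfloor (i+j)/2\rfloor$ and $e_m=(x,y)$; query $x$ and $y$; if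 either is outside, report it as a witness; otherwise recurse on $(i,m)$ and $(m,j)$. *)

theory Defs
  imports "HOL-Analysis.Analysis"
begin

type_synonym pt = "real \<times> real"

definition cross2 :: "pt \<Rightarrow> pt \<Rightarrow> real" where
  "cross2 a b = fst a * snd b - snd a * fst b"

definition lexless :: "pt \<Rightarrow> pt \<Rightarrow> bool" where
  "lexless a b \<longleftrightarrow> fst a < fst b \<or> (fst a = fst b \<and> snd a < snd b)"

definition hull_vertices :: "pt set \<Rightarrow> pt set" where
  "hull_vertices P = {x. x extreme_point_of (convex hull P)}"

definition leftmost :: "pt set \<Rightarrow> pt" where
  "leftmost P = (THE x. x \<in> hull_vertices P \<and> (\<forall>y\<in>hull_vertices P. y \<noteq> x \<longrightarrow> lexless x y))"

definition rightmost :: "pt set \<Rightarrow> pt" where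
  "rightmost P = (THE x. x \<in> hull_vertices P \<and> (\<forall>y\<in>hull_vertices P. y \<noteq> x \<longrightarrow> lexless y x))"

text \<open>The upper chain D+ as its vertex list w_0 = v, ..., w_k = v' in clockwise
  order (= lexicographic order); edge e_i joins w_(i-1) and w_i.\<close>
definition upper_chain :: "pt set \<Rightarrow> pt list" where
  "upper_chain P = (THE w. sorted_wrt lexless w \<and>
     set w = {u \<in> hull_vertices P. u = leftmost P \<or> u = rightmost P \<or>
                 cross2 (rightmost P - leftmost P) (u - leftmost P) > 0})"

definition line_inter :: "pt \<Rightarrow> pt \<Rightarrow> pt \<Rightarrow> pt \<Rightarrow> pt" where
  "line_inter a b c d = a + (cross2 (c - a) (d - c) / cross2 (b - a) (d - c)) *\<^sub>R (b - a)"

text \<open>Returns the list of queried points (in order) and either None (all points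
  below D[i,j] classified inside) or Some p (witness outside C).\<close>
function rec_call :: "(pt \<Rightarrow> bool) \<Rightarrow> pt list \<Rightarrow> nat \<Rightarrow> nat \<Rightarrow> pt list \<times> pt option" where
  "rec_call inC w i j =
    (if j \<le> i then ([], None) else
     (let q = line_inter (w ! (i - 1)) (w ! i) (w ! (j - 1)) (w ! j) in
      if inC q then ([q], None) else
      (let m = (i + j) div 2; x = w ! (m - 1); y = w ! m in
       if \<not> inC x then ([q, x], Some x)
       else if \<not> inC y then ([q, x, y], Some y)
       else if j = i + 1 then ([q, x, y], None)
       else (case rec_call inC w i m of
               (t1, Some p) \<Rightarrow> ([q, x, y] @ t1, Some p)
             | (t1, None) \<Rightarrow> (case rec_call inC w m j of
                    (t2, r2) \<Rightarrow> ([q, x, y] @ t1 @ t2, r2))))))"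
  by pat_completeness auto
termination
  by (relation "Wellfounded.measure (\<lambda>(_, _, i, j). j - i)") auto

definition upper_part :: "(pt \<Rightarrow> bool) \<Rightarrow> pt set \<Rightarrow> pt list \<times> pt option" where
  "upper_part inC P = rec_call inC (upper_chain P) 1 (length (upper_chain P) - 1)"

text \<open>Points below vv' are handled symmetrically, via the point reflection
  p \<mapsto> -p (which swaps v and v' and maps the lower chain onto an upper chain).\<close>
definition lower_part :: "(pt \<Rightarrow> bool) \<Rightarrow> pt set \<Rightarrow> pt list \<times> pt option" where
  "lower_part inC P =
     (case upper_part (\<lambda>q. inC (- q)) (uminus ` P) of
        (t, r) \<Rightarrow> (map uminus t, map_option uminus r))"

definition end_nbrs :: "pt list \<Rightarrow> pt list" where
  "end_nbrs w = (if length w \<ge> 2 then [w ! 1, w ! (length w - 2)] else [])"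

text \<open>The whole classification algorithm with separation oracle for C
  (only the in/out answer is used). Returns the queried points and the
  outcome: None = "P \<subseteq> C verified", Some p = witness p reported outside.\<close>
definition classify :: "pt set \<Rightarrow> pt set \<Rightarrow> pt list \<times> pt option" where
  "classify C P =
     (let inC = (\<lambda>q. q \<in> C);
          init = [leftmost P, rightmost P] @ end_nbrs (upper_chain P)
                 @ map uminus (end_nbrs (upper_chain (uminus ` P)))
      in case find (\<lambda>q. \<not> inC q) init of
           Some p \<Rightarrow> (init, Some p)
         | None \<Rightarrow> (case upper_part inC P of
              (t1, Some p) \<Rightarrow> (init @ t1, Some p)
            | (t1, None) \<Rightarrow> (case lower_part inC P of
                 (t2, r2) \<Rightarrow> (init @ t1 @ t2, r2))))"

definition inner_fence_size :: "pt set \<Rightarrow> pt set \<Rightarrow> nat" where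
  "inner_fence_size C P = (LEAST k. \<exists>V. finite V \<and> card V = k \<and>
      convex hull V \<subseteq> C \<and> C \<inter> P = convex hull V \<inter> P)"

definition convex_body :: "pt set \<Rightarrow> bool" where
  "convex_body C \<longleftrightarrow> compact C \<and> convex C \<and> interior C \<noteq> {}"

end

theory Submission
  imports Defs
begin

text \<open>
  The upper hull chain \<open>v = w 0, \<dots>, w k = v'\<close> is a convex chain: every edge turns strictly
  clockwise from every earlier one. Hence for a call \<open>(i, j)\<close> the apex \<open>q\<close> lies on the forward
  ray of \<open>e i\<close> and on the backward ray of \<open>e j\<close>, and the triangle \<open>w (i - 1), q, w j\<close> contains
  all chain vertices in between; if \<open>q \<in> C\<close>, convexity of \<open>C\<close> puts them all in \<open>C\<close>. So when
  no witness is found, every vertex of \<open>CH(P)\<close>, and hence \<open>P\<close>, lies in \<open>C\<close>.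

  For the bound fix an inner fence \<open>V\<close>. The points of \<open>P\<close> in \<open>C\<close> lie in \<open>conv V\<close>, so a call
  that recurses has its endpoints in \<open>conv V\<close> but \<open>q \<notin> conv V\<close>; then no point of \<open>V\<close> supports
  \<open>conv V\<close> along both lines \<open>\<ell> i\<close> and \<open>\<ell> j\<close>. Charging the call to the points of \<open>V\<close> that
  support some edge among \<open>e i, \<dots>, e (j - 1)\<close> but not \<open>e j\<close>, the two halves are charged to
  disjoint subsets of the parent's charge, so each of the \<open>O(log n)\<close> recursion levels costs
  \<open>O(|V|)\<close> queries.
\<close>

lemma cross2_add_left [simp]: "cross2 (a + b) c = cross2 a c + cross2 b c"
  and cross2_add_right [simp]: "cross2 c (a + b) = cross2 c a + cross2 c b"
  and cross2_diff_left [simp]: "cross2 (a - b) c = cross2 a c - cross2 b c"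
  and cross2_diff_right [simp]: "cross2 c (a - b) = cross2 c a - cross2 c b"
  and cross2_minus_left [simp]: "cross2 (- a) c = - cross2 a c"
  and cross2_minus_right [simp]: "cross2 c (- a) = - cross2 c a"
  and cross2_scaleR_left [simp]: "cross2 (r *\<^sub>R a) c = r * cross2 a c"
  and cross2_scaleR_right [simp]: "cross2 c (r *\<^sub>R a) = r * cross2 c a"
  and cross2_self [simp]: "cross2 a a = 0"
  by (simp_all add: cross2_def algebra_simps)

lemma cross2_swap: "cross2 a b = - cross2 b a"
  by (simp add: cross2_def)

lemma cross2_sum_left: "cross2 (sum f A) c = (\<Sum>x\<in>A. cross2 (f x) c)"
  by (simp add: cross2_def fst_sum snd_sum sum_distrib_right sum_subtractf)

lemma cross2_sum_right: "cross2 c (sum f A) = (\<Sum>x\<in>A. cross2 c (f x))"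
  by (simp add: cross2_def fst_sum snd_sum sum_distrib_left sum_subtractf)

lemma cross2_cramer: "cross2 u v *\<^sub>R x = cross2 x v *\<^sub>R u + cross2 u x *\<^sub>R v"
  by (simp add: prod_eq_iff cross2_def algebra_simps)

lemma cross2_coordinates:
  assumes "cross2 u v \<noteq> 0"
  shows "x = (cross2 x v / cross2 u v) *\<^sub>R u + (cross2 u x / cross2 u v) *\<^sub>R v"
proof -
  have "x = (1 / cross2 u v) *\<^sub>R (cross2 u v *\<^sub>R x)" using assms by simp
  also have "\<dots> = (1 / cross2 u v) *\<^sub>R (cross2 x v *\<^sub>R u + cross2 u x *\<^sub>R v)"
    by (subst cross2_cramer) (rule refl)
  finally show ?thesis by (simp add: scaleR_add_right)
qed

lemma cross2_neg_trans:
  assumes "lexless 0 u" "lexless 0 v" "lexless 0 x" "cross2 u v < 0" "cross2 v x < 0"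
  shows "cross2 u x < 0"
proof -
  have u: "fst u \<ge> 0" and x: "fst x \<ge> 0" using assms(1,3) by (auto simp: lexless_def)
  have v: "fst v > 0"
  proof (rule ccontr)
    assume "\<not> fst v > 0"
    then have "fst v = 0" "snd v > 0" using assms(2) by (auto simp: lexless_def)
    then show False using assms(4) u by (simp add: cross2_def mult_less_0_iff)
  qed
  have ux: "fst u > 0 \<or> fst x > 0"
  proof (rule ccontr)
    assume "\<not> (fst u > 0 \<or> fst x > 0)"
    then have "fst x = 0" "snd x > 0" using assms(3) x by (auto simp: lexless_def)
    then show False using assms(5) v by (simp add: cross2_def zero_less_mult_iff mult_less_0_iff)
  qed
  have "cross2 u v * fst x = cross2 x v * fst u + cross2 u x * fst v"
    using arg_cong[OF cross2_cramer[of u v x], of fst] by simp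
  moreover have "cross2 u v * fst x \<le> 0" using assms(4) x by (simp add: mult_nonpos_nonneg)
  moreover have "cross2 x v * fst u \<ge> 0" using assms(5) u cross2_swap[of x v] by (simp add: mult_nonpos_nonneg)
  moreover have "cross2 u v * fst x < 0 \<or> cross2 x v * fst u > 0"
  proof (cases "fst u > 0")
    case True
    then show ?thesis using assms(5) cross2_swap[of x v] by (simp add: mult_neg_pos)
  next
    case False
    then show ?thesis using ux assms(4) by (simp add: mult_neg_pos)
  qed
  ultimately have "cross2 u x * fst v < 0" by linarith
  then show ?thesis using v by (simp add: mult_less_0_iff)
qed

lemma cross2_triangle_sum:
  "cross2 (c - b) (x - b) + cross2 (a - c) (x - c) + cross2 (b - a) (x - a) = cross2 (b - a) (c - a)"
  by (simp add: cross2_def algebra_simps)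

lemma mem_convex_hull_3_cross2:
  assumes "cross2 (b - a) (x - a) \<le> 0" "cross2 (c - b) (x - b) \<le> 0" "cross2 (a - c) (x - c) \<le> 0"
    and "cross2 (b - a) (c - a) \<noteq> 0"
  shows "x \<in> convex hull {a, b, c}"
proof -
  define D where "D = cross2 (b - a) (c - a)"
  define \<alpha> \<beta> \<gamma> where "\<alpha> = cross2 (c - b) (x - b) / D" and "\<beta> = cross2 (a - c) (x - c) / D"
    and "\<gamma> = cross2 (b - a) (x - a) / D"
  have "D < 0" using assms(1-3) assms(4)[folded D_def] cross2_triangle_sum[of c b x a, folded D_def] by linarith
  then have "\<alpha> \<ge> 0" "\<beta> \<ge> 0" "\<gamma> \<ge> 0"
    using assms(1-3) by (simp_all add: \<alpha>_def \<beta>_def \<gamma>_def divide_nonpos_neg)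
  moreover have "\<alpha> + \<beta> + \<gamma> = 1"
    using cross2_triangle_sum[of c b x a, folded D_def] \<open>D < 0\<close>
    unfolding \<alpha>_def \<beta>_def \<gamma>_def add_divide_distrib[symmetric] by simp
  moreover have "x = \<alpha> *\<^sub>R a + \<beta> *\<^sub>R b + \<gamma> *\<^sub>R c"
  proof -
    have "D *\<^sub>R x = cross2 (c - b) (x - b) *\<^sub>R a + cross2 (a - c) (x - c) *\<^sub>R b
        + cross2 (b - a) (x - a) *\<^sub>R c"
      unfolding D_def by (simp add: prod_eq_iff cross2_def algebra_simps)
    also have "\<dots> = D *\<^sub>R (\<alpha> *\<^sub>R a + \<beta> *\<^sub>R b + \<gamma> *\<^sub>R c)"
      using \<open>D < 0\<close> by (simp add: \<alpha>_def \<beta>_def \<gamma>_def scaleR_add_right)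
    finally show ?thesis using \<open>D < 0\<close> by simp
  qed
  ultimately show ?thesis unfolding convex_hull_3 by blast
qed

definition edge :: "pt list \<Rightarrow> nat \<Rightarrow> pt" where
  "edge w s = w ! s - w ! (s - 1)"

definition convex_chain :: "pt list \<Rightarrow> bool" where
  "convex_chain w \<longleftrightarrow>
     (\<forall>s r. 1 \<le> s \<longrightarrow> s < r \<longrightarrow> r < length w \<longrightarrow> cross2 (edge w s) (edge w r) < 0)"

lemma chord_eq_sum_edges: "a \<le> b \<Longrightarrow> w ! b - w ! a = (\<Sum>s = a..<b. edge w (Suc s))"
  by (simp add: edge_def sum_Suc_diff')

lemma convex_chain_chord_cross_neg:
  assumes "convex_chain w" "a < b" "b \<le> c" "c < d" "d < length w"
  shows "cross2 (w ! b - w ! a) (w ! d - w ! c) < 0"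
proof -
  have "cross2 (w ! b - w ! a) (w ! d - w ! c)
      = (\<Sum>r = c..<d. \<Sum>s = a..<b. cross2 (edge w (Suc s)) (edge w (Suc r)))"
    unfolding chord_eq_sum_edges[OF less_imp_le[OF assms(2)]] chord_eq_sum_edges[OF less_imp_le[OF assms(4)]]
    by (simp only: cross2_sum_left cross2_sum_right)
  also have "\<dots> < (\<Sum>r = c..<d. \<Sum>s = a..<b. 0)"
    using assms by (intro sum_strict_mono) (auto simp: convex_chain_def)
  finally show ?thesis by simp
qed

lemma convex_chain_chord_cross_nonpos:
  assumes "convex_chain w" "a \<le> b" "b \<le> c" "c \<le> d" "d < length w"
  shows "cross2 (w ! b - w ! a) (w ! d - w ! c) \<le> 0"
  using convex_chain_chord_cross_neg[OF assms(1), of a b c d] assms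
  by (cases "a = b \<or> c = d") auto

lemma convex_chainI:
  assumes "\<And>t. 1 \<le> t \<Longrightarrow> Suc t < length w \<Longrightarrow> cross2 (edge w t) (edge w (Suc t)) < 0"
    and "\<And>t. 1 \<le> t \<Longrightarrow> t < length w \<Longrightarrow> lexless 0 (edge w t)"
  shows "convex_chain w"
proof -
  have main: "cross2 (edge w s) (edge w (s + Suc n)) < 0" if "1 \<le> s" "s + Suc n < length w" for s n
    using that(2)
  proof (induction n)
    case 0
    then show ?case using assms(1)[OF that(1)] by simp
  next
    case (Suc n)
    have "cross2 (edge w s) (edge w (s + Suc n)) < 0" "1 \<le> s + Suc n"
      using Suc by simp_all
    moreover have "cross2 (edge w (s + Suc n)) (edge w (Suc (s + Suc n))) < 0"
      using assms(1)[of "s + Suc n"] Suc.prems by simp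
    moreover have "lexless 0 (edge w s)" "lexless 0 (edge w (s + Suc n))"
      "lexless 0 (edge w (Suc (s + Suc n)))"
      using assms(2)[OF that(1)] assms(2)[of "s + Suc n"] assms(2)[of "Suc (s + Suc n)"] Suc.prems
      by simp_all
    ultimately show ?case using cross2_neg_trans[of "edge w s" "edge w (s + Suc n)"] by simp
  qed
  show ?thesis unfolding convex_chain_def
  proof (intro allI impI)
    fix s r assume "1 \<le> s" "s < r" "r < length w"
    moreover have "r = s + Suc (r - s - 1)" using \<open>s < r\<close> by simp
    ultimately show "cross2 (edge w s) (edge w r) < 0" using main[of s "r - s - 1"] by simp
  qed
qed

definition apex :: "pt list \<Rightarrow> nat \<Rightarrow> nat \<Rightarrow> pt" where
  "apex w i j = line_inter (w ! (i - 1)) (w ! i) (w ! (j - 1)) (w ! j)"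

lemma apex_on_edge_lines:
  assumes "convex_chain w" "1 \<le> i" "i < j" "j < length w"
  obtains \<tau> \<sigma> where "\<tau> > 0" "\<sigma> > 0"
    "apex w i j = w ! (i - 1) + \<tau> *\<^sub>R edge w i" "apex w i j = w ! j - \<sigma> *\<^sub>R edge w j"
proof -
  let ?A = "w ! (i - 1)" and ?B = "w ! j"
  define k where "k = cross2 (edge w i) (edge w j)"
  define \<tau> where "\<tau> = cross2 (w ! (j - 1) - ?A) (edge w j) / k"
  define \<sigma> where "\<sigma> = cross2 (edge w i) (?B - ?A) / k"
  have "k < 0"
    unfolding k_def edge_def by (rule convex_chain_chord_cross_neg) (use assms in auto)
  have "cross2 (w ! (j - 1) - ?A) (edge w j) < 0"
    unfolding edge_def by (rule convex_chain_chord_cross_neg) (use assms in auto)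
  with \<open>k < 0\<close> have "\<tau> > 0" by (simp add: \<tau>_def divide_neg_neg)
  have "cross2 (edge w i) (?B - ?A) = cross2 (w ! i - ?A) (?B - w ! i)"
    by (simp add: edge_def cross2_def algebra_simps)
  also have "\<dots> < 0" by (rule convex_chain_chord_cross_neg) (use assms in auto)
  finally have "\<sigma> > 0" using \<open>k < 0\<close> by (simp add: \<sigma>_def divide_neg_neg)
  have q: "apex w i j = ?A + \<tau> *\<^sub>R edge w i"
    unfolding apex_def line_inter_def \<tau>_def k_def edge_def ..
  define x where "x = ?B - apex w i j"
  have "\<tau> * k = cross2 (w ! (j - 1) - ?A) (edge w j)" using \<open>k < 0\<close> by (simp add: \<tau>_def)
  then have "cross2 x (edge w j) = 0"
    unfolding x_def q k_def by (simp add: edge_def cross2_def algebra_simps)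
  moreover have "cross2 (edge w i) x = cross2 (edge w i) (?B - ?A)"
    unfolding x_def q by (simp add: cross2_def algebra_simps)
  ultimately have "x = \<sigma> *\<^sub>R edge w j"
    using cross2_coordinates[of "edge w i" "edge w j" x] \<open>k < 0\<close> by (simp add: k_def \<sigma>_def)
  then have "apex w i j = ?B - \<sigma> *\<^sub>R edge w j" by (simp add: x_def algebra_simps)
  with \<open>\<tau> > 0\<close> \<open>\<sigma> > 0\<close> q show thesis by (rule that)
qed

lemma chain_in_apex_triangle:
  assumes "convex_chain w" "1 \<le> i" "i < j" "j < length w" "i - 1 \<le> t" "t \<le> j"
  shows "w ! t \<in> convex hull {w ! (i - 1), apex w i j, w ! j}"
proof (cases "t = i - 1 \<or> t = j")
  case True
  then show ?thesis by (auto intro: hull_inc)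
next
  case False
  then have t: "i \<le> t" "t \<le> j - 1" using assms by auto
  obtain \<tau> \<sigma> where "\<tau> > 0" "\<sigma> > 0"
    and qA: "apex w i j = w ! (i - 1) + \<tau> *\<^sub>R edge w i"
    and qB: "apex w i j = w ! j - \<sigma> *\<^sub>R edge w j"
    using apex_on_edge_lines[OF assms(1-4)] .
  let ?A = "w ! (i - 1)" and ?B = "w ! j" and ?q = "apex w i j" and ?x = "w ! t"
  have "cross2 (?q - ?A) (?x - ?A) = \<tau> * cross2 (w ! i - ?A) (?x - w ! i)"
    unfolding qA by (simp add: edge_def cross2_def algebra_simps)
  also have "\<dots> \<le> 0"
    using \<open>\<tau> > 0\<close> convex_chain_chord_cross_nonpos[OF assms(1), of "i - 1" i i t] t assms(4)
    by (simp add: mult_nonneg_nonpos)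
  finally have Aq: "cross2 (?q - ?A) (?x - ?A) \<le> 0" .
  have "cross2 (?B - ?q) (?x - ?q) = \<sigma> * cross2 (w ! (j - 1) - ?x) (?B - w ! (j - 1))"
    unfolding qB by (simp add: edge_def cross2_def algebra_simps)
  also have "\<dots> \<le> 0"
    using \<open>\<sigma> > 0\<close> convex_chain_chord_cross_nonpos[OF assms(1), of t "j - 1" "j - 1" j] t assms(4)
    by (simp add: mult_nonneg_nonpos)
  finally have qB': "cross2 (?B - ?q) (?x - ?q) \<le> 0" .
  have "cross2 (?A - ?B) (?x - ?B) = cross2 (?x - ?A) (?B - ?x)"
    by (simp add: cross2_def algebra_simps)
  also have "\<dots> \<le> 0"
    using convex_chain_chord_cross_nonpos[OF assms(1), of "i - 1" t t j] t assms(4) by simp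
  finally have BA: "cross2 (?A - ?B) (?x - ?B) \<le> 0" .
  have "cross2 (?q - ?A) (?B - ?A) = \<tau> * cross2 (w ! i - ?A) (?B - w ! i)"
    unfolding qA by (simp add: edge_def cross2_def algebra_simps)
  also have "\<dots> < 0"
    using \<open>\<tau> > 0\<close> convex_chain_chord_cross_neg[OF assms(1), of "i - 1" i i j] assms(2-4)
    by (simp add: mult_pos_neg)
  finally have "cross2 (?q - ?A) (?B - ?A) \<noteq> 0" by simp
  with Aq qB' BA show ?thesis by (rule mem_convex_hull_3_cross2)
qed

lemma apex_in_triangle:
  assumes "convex_chain w" "1 \<le> i" "i < j" "j < length w"
    and "cross2 (edge w i) (z - w ! (i - 1)) \<ge> 0" "cross2 (edge w j) (z - w ! j) \<ge> 0"
  shows "apex w i j \<in> convex hull {w ! (i - 1), z, w ! j}"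
proof -
  obtain \<tau> \<sigma> where "\<tau> > 0" "\<sigma> > 0"
    and qA: "apex w i j = w ! (i - 1) + \<tau> *\<^sub>R edge w i"
    and qB: "apex w i j = w ! j - \<sigma> *\<^sub>R edge w j"
    using apex_on_edge_lines[OF assms(1-4)] .
  let ?A = "w ! (i - 1)" and ?B = "w ! j" and ?q = "apex w i j"
  have "cross2 (z - ?A) (?q - ?A) = - \<tau> * cross2 (edge w i) (z - ?A)"
    unfolding qA by (simp add: cross2_def algebra_simps)
  also have "\<dots> \<le> 0" using \<open>\<tau> > 0\<close> assms(5) by simp
  finally have Az: "cross2 (z - ?A) (?q - ?A) \<le> 0" .
  have "cross2 (?B - z) (?q - z) = - \<sigma> * cross2 (edge w j) (z - ?B)"
    unfolding qB by (simp add: cross2_def algebra_simps)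
  also have "\<dots> \<le> 0" using \<open>\<sigma> > 0\<close> assms(6) by simp
  finally have zB: "cross2 (?B - z) (?q - z) \<le> 0" .
  have "cross2 (?A - ?B) (?q - ?B) = \<sigma> * cross2 (w ! (j - 1) - ?A) (?B - w ! (j - 1))"
    unfolding qB by (simp add: edge_def cross2_def algebra_simps)
  also have "\<dots> < 0"
    using \<open>\<sigma> > 0\<close> convex_chain_chord_cross_neg[OF assms(1), of "i - 1" "j - 1" "j - 1" j] assms(2-4)
    by (simp add: mult_pos_neg)
  finally have BA: "cross2 (?A - ?B) (?q - ?B) < 0" .
  then have "cross2 (z - ?A) (?B - ?A) \<noteq> 0"
    using Az zB cross2_triangle_sum[of ?B z ?q ?A] by linarith
  with Az zB BA show ?thesis by (intro mem_convex_hull_3_cross2) auto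
qed

definition support :: "pt set \<Rightarrow> pt \<Rightarrow> pt set" where
  "support V d = {z \<in> V. \<forall>y\<in>V. cross2 d y \<le> cross2 d z}"

lemma convex_hull_cross2_le:
  assumes "x \<in> convex hull V" "\<forall>y\<in>V. cross2 d y \<le> m"
  shows "cross2 d x \<le> m"
proof -
  have "{x. cross2 d x \<le> m} = {x. inner (- snd d, fst d) x \<le> m}"
    by (auto simp: cross2_def inner_prod_def algebra_simps)
  then have "convex {x. cross2 d x \<le> m}" by (simp add: convex_halfspace_le)
  then have "convex hull V \<subseteq> {x. cross2 d x \<le> m}"
    using assms(2) by (intro hull_minimal) auto
  then show ?thesis using assms(1) by auto
qed

lemma support_nonempty:
  assumes "finite V" "V \<noteq> {}"
  shows "support V d \<noteq> {}"
proof -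
  have "Max ((\<lambda>y. cross2 d y) ` V) \<in> (\<lambda>y. cross2 d y) ` V" using assms by (intro Max_in) auto
  then obtain z where "z \<in> V" "cross2 d z = Max ((\<lambda>y. cross2 d y) ` V)" by auto
  then have "z \<in> support V d" using assms(1) by (simp add: support_def)
  then show ?thesis by blast
qed

lemma support_between:
  assumes "convex_chain w" "1 \<le> s" "s < t" "t < r" "r < length w"
    and "z \<in> support V (edge w s)" "z \<in> support V (edge w r)"
  shows "z \<in> support V (edge w t)"
proof -
  have sr: "cross2 (edge w s) (edge w r) < 0" and tr: "cross2 (edge w t) (edge w r) < 0"
    and st: "cross2 (edge w s) (edge w t) < 0"
    using assms(1-5) unfolding convex_chain_def by auto
  define \<alpha> \<beta> where "\<alpha> = cross2 (edge w t) (edge w r) / cross2 (edge w s) (edge w r)"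
    and "\<beta> = cross2 (edge w s) (edge w t) / cross2 (edge w s) (edge w r)"
  have "\<alpha> \<ge> 0" "\<beta> \<ge> 0" using sr tr st by (simp_all add: \<alpha>_def \<beta>_def divide_nonpos_neg)
  have et: "edge w t = \<alpha> *\<^sub>R edge w s + \<beta> *\<^sub>R edge w r"
    unfolding \<alpha>_def \<beta>_def using sr by (intro cross2_coordinates) simp
  have "cross2 (edge w t) y \<le> cross2 (edge w t) z" if "y \<in> V" for y
  proof -
    have "cross2 (edge w s) y \<le> cross2 (edge w s) z" "cross2 (edge w r) y \<le> cross2 (edge w r) z"
      using assms(6,7) that unfolding support_def by auto
    with \<open>\<alpha> \<ge> 0\<close> \<open>\<beta> \<ge> 0\<close> show ?thesis
      unfolding et by (simp add: add_mono mult_left_mono)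
  qed
  then show ?thesis using assms(6) unfolding support_def by auto
qed

lemma support_disjoint_if_apex_outside:
  assumes "convex_chain w" "1 \<le> i" "i < j" "j < length w"
    and "w ! (i - 1) \<in> convex hull V" "w ! j \<in> convex hull V" "apex w i j \<notin> convex hull V"
  shows "support V (edge w i) \<inter> support V (edge w j) = {}"
proof (rule ccontr)
  assume "support V (edge w i) \<inter> support V (edge w j) \<noteq> {}"
  then obtain z where z: "z \<in> support V (edge w i)" "z \<in> support V (edge w j)" by auto
  have "cross2 (edge w i) (w ! (i - 1)) \<le> cross2 (edge w i) z"
    using z(1) assms(5) by (intro convex_hull_cross2_le) (auto simp: support_def)
  moreover have "cross2 (edge w j) (w ! j) \<le> cross2 (edge w j) z"
    using z(2) assms(6) by (intro convex_hull_cross2_le) (auto simp: support_def)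
  ultimately have "apex w i j \<in> convex hull {w ! (i - 1), z, w ! j}"
    by (intro apex_in_triangle[OF assms(1-4)]) simp_all
  also have "\<dots> \<subseteq> convex hull V"
    using assms(5,6) z(1) by (intro convex_hull_subset) (auto simp: support_def hull_inc)
  finally show False using assms(7) by contradiction
qed

definition charged :: "pt set \<Rightarrow> pt list \<Rightarrow> nat \<Rightarrow> nat \<Rightarrow> pt set" where
  "charged V w i j =
     {z \<in> V. (\<exists>t. i \<le> t \<and> t < j \<and> z \<in> support V (edge w t)) \<and> z \<notin> support V (edge w j)}"

lemma charged_nonempty_if_apex_outside:
  assumes "convex_chain w" "1 \<le> i" "i < j" "j < length w" "finite V"
    and "w ! (i - 1) \<in> convex hull V" "w ! j \<in> convex hull V" "apex w i j \<notin> convex hull V"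
  shows "charged V w i j \<noteq> {}"
proof -
  have "V \<noteq> {}" using assms(6) by auto
  then obtain z where "z \<in> support V (edge w i)" using support_nonempty[OF assms(5)] by blast
  moreover have "z \<notin> support V (edge w j)"
    using calculation support_disjoint_if_apex_outside[OF assms(1-4,6-8)] by blast
  ultimately have "z \<in> charged V w i j" using assms(3) by (auto simp: charged_def support_def)
  then show ?thesis by blast
qed

lemma card_charged_split:
  assumes "convex_chain w" "1 \<le> i" "i < m" "m < j" "j < length w" "finite V"
  shows "card (charged V w i m) + card (charged V w m j) \<le> card (charged V w i j)"
proof -
  have left: "charged V w i m \<subseteq> charged V w i j"
  proof
    fix z assume "z \<in> charged V w i m"
    then obtain t where "z \<in> V" "i \<le> t" "t < m" "z \<in> support V (edge w t)"
      "z \<notin> support V (edge w m)"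
      by (auto simp: charged_def)
    moreover from this have "z \<notin> support V (edge w j)"
      using support_between[OF assms(1), of t m j z V] assms(2,4,5) by auto
    ultimately show "z \<in> charged V w i j" using assms(4) by (auto simp: charged_def)
  qed
  have right: "charged V w m j \<subseteq> charged V w i j"
    using assms(3) unfolding charged_def by (auto intro: order.strict_implies_order order.trans)
  have "charged V w i m \<inter> charged V w m j = {}"
  proof (rule ccontr)
    assume "charged V w i m \<inter> charged V w m j \<noteq> {}"
    then obtain z t1 t2 where "z \<notin> support V (edge w m)" "i \<le> t1" "t1 < m" "z \<in> support V (edge w t1)"
      "m \<le> t2" "t2 < j" "z \<in> support V (edge w t2)"
      by (auto simp: charged_def)
    moreover have "t2 \<noteq> m" using calculation by auto
    ultimately show False
      using support_between[OF assms(1), of t1 m t2 z V] assms(2,5) by auto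
  qed
  moreover have "finite (charged V w i j)" using assms(6) by (simp add: charged_def)
  ultimately have "card (charged V w i m \<union> charged V w m j) = card (charged V w i m) + card (charged V w m j)"
    using left right by (meson card_Un_disjoint finite_subset)
  moreover have "card (charged V w i m \<union> charged V w m j) \<le> card (charged V w i j)"
    using left right \<open>finite (charged V w i j)\<close> by (intro card_mono) auto
  ultimately show ?thesis by simp
qed

declare rec_call.simps [simp del]

lemma bisection_induct:
  assumes "\<And>i j. (i < j \<Longrightarrow> j \<noteq> Suc i \<Longrightarrow> P i ((i + j) div 2)) \<Longrightarrow>
      (i < j \<Longrightarrow> j \<noteq> Suc i \<Longrightarrow> P ((i + j) div 2) j) \<Longrightarrow> P i j"
  shows "P i j"
proof (induction "j - i" arbitrary: i j rule: less_induct)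
  case less
  show ?case
  proof (rule assms)
    assume "i < j" "j \<noteq> Suc i"
    then show "P i ((i + j) div 2)" "P ((i + j) div 2) j" by (auto intro: less)
  qed
qed

lemma rec_call_Some_cases:
  assumes "snd (rec_call inC w i j) = Some p"
  shows "i < j \<and>
    ((p = w ! ((i + j) div 2 - 1) \<or> p = w ! ((i + j) div 2)) \<and> \<not> inC p \<or>
     j \<noteq> Suc i \<and> (snd (rec_call inC w i ((i + j) div 2)) = Some p \<or>
                    snd (rec_call inC w ((i + j) div 2) j) = Some p))"
  using assms by (subst (asm) rec_call.simps) (auto simp: Let_def split: if_splits prod.splits option.splits)

lemma rec_call_None_cases:
  assumes "snd (rec_call inC w i j) = None" "i < j" "\<not> inC (apex w i j)"
  shows "inC (w ! ((i + j) div 2 - 1)) \<and> inC (w ! ((i + j) div 2)) \<and>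
    (j = Suc i \<or> snd (rec_call inC w i ((i + j) div 2)) = None \<and>
                  snd (rec_call inC w ((i + j) div 2) j) = None)"
  using assms
  by (subst (asm) rec_call.simps) (auto simp: Let_def apex_def split: if_splits prod.splits option.splits)

lemma length_rec_call_le:
  "length (fst (rec_call inC w i j)) \<le> 3 +
    (if i < j \<and> \<not> inC (apex w i j) \<and> inC (w ! ((i + j) div 2 - 1)) \<and> inC (w ! ((i + j) div 2))
        \<and> j \<noteq> Suc i
     then length (fst (rec_call inC w i ((i + j) div 2))) + length (fst (rec_call inC w ((i + j) div 2) j))
     else 0)"
  by (subst rec_call.simps) (auto simp: Let_def apex_def split: prod.splits option.splits)

lemma rec_call_Some:
  assumes "1 \<le> i" "j < length w" "snd (rec_call inC w i j) = Some p"
  shows "p \<in> set w \<and> \<not> inC p"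
  using assms
proof (induction i j rule: bisection_induct)
  case (1 i j)
  show ?case using rec_call_Some_cases[OF "1.prems"(3)]
  proof (elim conjE disjE)
    assume "i < j" "p = w ! ((i + j) div 2 - 1)" "\<not> inC p"
    then show ?thesis using "1.prems"(2) by auto
  next
    assume "i < j" "p = w ! ((i + j) div 2)" "\<not> inC p"
    then show ?thesis using "1.prems"(2) by auto
  next
    assume "i < j" "j \<noteq> Suc i" "snd (rec_call inC w i ((i + j) div 2)) = Some p"
    then show ?thesis using "1.IH"(1) "1.prems"(1,2) by auto
  next
    assume "i < j" "j \<noteq> Suc i" "snd (rec_call inC w ((i + j) div 2) j) = Some p"
    then show ?thesis using "1.IH"(2) "1.prems"(1,2) by auto
  qed
qed

lemma rec_call_None:
  assumes "convex {x. inC x}" "convex_chain w"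
    and "1 \<le> i" "j < length w" "inC (w ! (i - 1))" "inC (w ! j)" "snd (rec_call inC w i j) = None"
    and "i - 1 \<le> t" "t \<le> j"
  shows "inC (w ! t)"
  using assms(3-)
proof (induction i j arbitrary: t rule: bisection_induct)
  case (1 i j)
  let ?m = "(i + j) div 2"
  consider (empty) "\<not> i < j" | (apex_in) "i < j" "inC (apex w i j)"
    | (leaf) "i < j" "\<not> inC (apex w i j)" "j = Suc i" | (split) "i < j" "\<not> inC (apex w i j)" "j \<noteq> Suc i"
    by blast
  then show ?case
  proof cases
    case empty
    then have "t = i - 1 \<or> t = j" using "1.prems"(6,7) by auto
    then show ?thesis using "1.prems"(3,4) by auto
  next
    case apex_in
    have "convex hull {w ! (i - 1), apex w i j, w ! j} \<subseteq> {x. inC x}"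
      using assms(1) "1.prems"(3,4) apex_in(2) by (intro hull_minimal) auto
    then show ?thesis
      using chain_in_apex_triangle[OF assms(2) "1.prems"(1) apex_in(1) "1.prems"(2,6,7)] by auto
  next
    case leaf
    then have "t = i - 1 \<or> t = ?m \<or> t = j" using "1.prems"(6,7) by auto
    then show ?thesis using rec_call_None_cases[OF "1.prems"(5) leaf(1,2)] "1.prems"(3,4) leaf(3) by auto
  next
    case split
    note mid = rec_call_None_cases[OF "1.prems"(5) split(1,2)]
    show ?thesis
    proof (cases "t \<le> ?m")
      case True
      then show ?thesis using "1.IH"(1) split mid "1.prems" by auto
    next
      case False
      then show ?thesis using "1.IH"(2) split mid "1.prems" by auto
    qed
  qed
qed

lemma length_rec_call_charged:
  assumes "convex_chain w" "finite V" "convex hull V \<subseteq> {x. inC x}"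
    and "\<forall>t<length w. inC (w ! t) \<longrightarrow> w ! t \<in> convex hull V"
    and "1 \<le> i" "j < length w" "inC (w ! (i - 1))" "inC (w ! j)" "j - i \<le> 2 ^ h"
  shows "length (fst (rec_call inC w i j)) \<le> 3 + 6 * card (charged V w i j) * h"
  \<comment> \<open>a call queries at most 3 points itself; the nonempty charge of a recursing call pays
    for the 6 queries its two children make themselves\<close>
  using assms(5-)
proof (induction h arbitrary: i j)
  case (0 i j)
  then have "\<not> (i < j \<and> j \<noteq> Suc i)" by auto
  then show ?case using length_rec_call_le[of inC w i j] by (auto split: if_splits)
next
  case (Suc h i j)
  let ?m = "(i + j) div 2"
  let ?U = "card (charged V w i j)" and ?U1 = "card (charged V w i ?m)" and ?U2 = "card (charged V w ?m j)"
  show ?case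
  proof (cases "i < j \<and> \<not> inC (apex w i j) \<and> inC (w ! (?m - 1)) \<and> inC (w ! ?m) \<and> j \<noteq> Suc i")
    case False
    then show ?thesis using length_rec_call_le[of inC w i j, unfolded if_not_P[OF False]] by simp
  next
    case True
    then have m: "i < ?m" "?m < j" by auto
    have IH1: "length (fst (rec_call inC w i ?m)) \<le> 3 + 6 * ?U1 * h"
      using Suc.IH[of i ?m] Suc.prems True m by auto
    have IH2: "length (fst (rec_call inC w ?m j)) \<le> 3 + 6 * ?U2 * h"
      using Suc.IH[of ?m j] Suc.prems True m by auto
    have "w ! (i - 1) \<in> convex hull V" "w ! j \<in> convex hull V" "apex w i j \<notin> convex hull V"
      using True assms(3,4) Suc.prems by auto
    then have "charged V w i j \<noteq> {}"
      using Suc.prems True by (intro charged_nonempty_if_apex_outside[OF assms(1) _ _ _ assms(2)]) auto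
    then have "?U \<ge> 1"
      using assms(2) by (simp add: Suc_le_eq card_gt_0_iff charged_def)
    have "?U1 + ?U2 \<le> ?U"
      using m Suc.prems assms(2) by (intro card_charged_split[OF assms(1)]) auto
    then have "6 * h * (?U1 + ?U2) \<le> 6 * h * ?U" by (rule mult_left_mono) simp
    then have "9 + 6 * ?U1 * h + 6 * ?U2 * h \<le> 3 + 6 * ?U * Suc h"
      using \<open>?U \<ge> 1\<close> by (simp add: algebra_simps)
    then show ?thesis
      using length_rec_call_le[of inC w i j, unfolded if_P[OF True]] IH1 IH2 by linarith
  qed
qed

lemma lexless_asym: "lexless a b \<Longrightarrow> \<not> lexless b a"
  by (auto simp: lexless_def)

lemma lexless_irrefl [simp]: "\<not> lexless a a"
  by (simp add: lexless_def)

lemma lexless_uminus [simp]: "lexless (- a) (- b) \<longleftrightarrow> lexless b a"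
  by (auto simp: lexless_def)

lemma lexless_0_diff_iff [simp]: "lexless 0 (b - a) \<longleftrightarrow> lexless a b"
  by (auto simp: lexless_def)

lemma class_linorder_lexless: "class.linorder (\<lambda>a b. lexless a b \<or> a = b) lexless"
  by unfold_locales (auto simp: lexless_def prod_eq_iff)

lemma lex_least_exists:
  assumes "finite S" "S \<noteq> {}"
  shows "\<exists>x\<in>S. \<forall>y\<in>S. y \<noteq> x \<longrightarrow> lexless x y"
  using linorder.Min_in[OF class_linorder_lexless assms] linorder.Min_le[OF class_linorder_lexless assms(1)]
  by blast

lemma lex_greatest_exists:
  assumes "finite S" "S \<noteq> {}"
  shows "\<exists>x\<in>S. \<forall>y\<in>S. y \<noteq> x \<longrightarrow> lexless y x"
  using linorder.Max_in[OF class_linorder_lexless assms] linorder.Max_ge[OF class_linorder_lexless assms(1)]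
  by blast

lemma the_lex_least:
  assumes "x \<in> S" "\<forall>y\<in>S. y \<noteq> x \<longrightarrow> lexless x y"
  shows "(THE x. x \<in> S \<and> (\<forall>y\<in>S. y \<noteq> x \<longrightarrow> lexless x y)) = x"
proof (rule the_equality)
  fix z assume z: "z \<in> S \<and> (\<forall>y\<in>S. y \<noteq> z \<longrightarrow> lexless z y)"
  show "z = x"
  proof (rule ccontr)
    assume "z \<noteq> x"
    then have "lexless z x" "lexless x z" using z assms by auto
    then show False by (auto dest: lexless_asym)
  qed
qed (use assms in simp)

lemma the_lex_greatest:
  assumes "x \<in> S" "\<forall>y\<in>S. y \<noteq> x \<longrightarrow> lexless y x"
  shows "(THE x. x \<in> S \<and> (\<forall>y\<in>S. y \<noteq> x \<longrightarrow> lexless y x)) = x"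
proof (rule the_equality)
  fix z assume z: "z \<in> S \<and> (\<forall>y\<in>S. y \<noteq> z \<longrightarrow> lexless y z)"
  show "z = x"
  proof (rule ccontr)
    assume "z \<noteq> x"
    then have "lexless z x" "lexless x z" using z assms by auto
    then show False by (auto dest: lexless_asym)
  qed
qed (use assms in simp)

lemma ex1_lex_sorted_list: "finite S \<Longrightarrow> \<exists>!w. sorted_wrt lexless w \<and> set w = S"
  by (rule linorder.ex1_sorted_list_for_set_if_finite[OF class_linorder_lexless])

lemma lex_sorted_nth_0:
  assumes "sorted_wrt lexless w" "x \<in> set w" "\<forall>y\<in>set w. y \<noteq> x \<longrightarrow> lexless x y"
  shows "w ! 0 = x"
proof (cases w)
  case (Cons a ws)
  then show ?thesis using assms by (auto dest: lexless_asym)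
qed (use assms in simp)

lemma lex_sorted_nth_last:
  assumes "sorted_wrt lexless w" "x \<in> set w" "\<forall>y\<in>set w. y \<noteq> x \<longrightarrow> lexless y x"
  shows "w ! (length w - 1) = x"
proof (cases w rule: rev_exhaust)
  case (snoc ws a)
  then show ?thesis using assms by (auto simp: sorted_wrt_append nth_append dest: lexless_asym)
qed (use assms in simp)

lemma hull_vertices_subset: "hull_vertices P \<subseteq> P"
  unfolding hull_vertices_def using extreme_point_of_convex_hull by auto

lemma finite_hull_vertices: "finite P \<Longrightarrow> finite (hull_vertices P)"
  using hull_vertices_subset finite_subset by blast

lemma convex_hull_hull_vertices:
  assumes "finite P"
  shows "convex hull (hull_vertices P) = convex hull P"
proof -
  have "compact (convex hull P)" using assms by (simp add: compact_convex_hull finite_imp_compact)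
  then show ?thesis
    unfolding hull_vertices_def by (rule Krein_Milman_Minkowski[OF _ convex_convex_hull, symmetric])
qed

lemma hull_vertices_nonempty:
  assumes "finite P" "P \<noteq> {}"
  shows "hull_vertices P \<noteq> {}"
proof
  assume "hull_vertices P = {}"
  then have "convex hull P = {}" using convex_hull_hull_vertices[OF assms(1)] by simp
  then show False using assms(2) by simp
qed

lemma hull_vertex_in_subset:
  assumes "x \<in> hull_vertices P" "T \<subseteq> P" "x \<in> convex hull T"
  shows "x \<in> T"
proof -
  have "convex hull T \<subseteq> convex hull P" using assms(2) by (rule hull_mono)
  then have "x extreme_point_of (convex hull T)"
    using assms(1,3) unfolding hull_vertices_def extreme_point_of_def by blast
  then show ?thesis by (rule extreme_point_of_convex_hull)
qed

lemma mem_uminus_image_iff: "x \<in> uminus ` S \<longleftrightarrow> - x \<in> (S :: pt set)"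
proof
  assume "x \<in> uminus ` S"
  then show "- x \<in> S" by auto
next
  assume "- x \<in> S"
  then show "x \<in> uminus ` S" by (rule image_eqI[rotated]) simp
qed

lemma hull_vertices_uminus: "hull_vertices (uminus ` P) = uminus ` hull_vertices P"
proof -
  have hull: "convex hull (uminus ` P) = uminus ` (convex hull P)"
    by (rule convex_hull_linear_image[OF linear_uminus, symmetric])
  have seg: "open_segment (- a) (- b) = uminus ` open_segment a b" for a b :: pt
    by (rule open_segment_linear_image[OF linear_uminus]) (simp add: inj_def)
  have "x extreme_point_of (uminus ` (convex hull P)) \<longleftrightarrow> - x extreme_point_of (convex hull P)" for x
  proof -
    have "(\<forall>a\<in>uminus ` (convex hull P). \<forall>b\<in>uminus ` (convex hull P). x \<notin> open_segment a b)
       \<longleftrightarrow> (\<forall>a\<in>convex hull P. \<forall>b\<in>convex hull P. - x \<notin> open_segment a b)"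
      by (auto simp: seg mem_uminus_image_iff)
    then show ?thesis unfolding extreme_point_of_def mem_uminus_image_iff by blast
  qed
  then show ?thesis unfolding hull_vertices_def hull by force
qed

lemma leftmost:
  assumes "finite P" "P \<noteq> {}"
  shows "leftmost P \<in> hull_vertices P" "\<forall>y\<in>hull_vertices P. y \<noteq> leftmost P \<longrightarrow> lexless (leftmost P) y"
proof -
  obtain x where x: "x \<in> hull_vertices P" "\<forall>y\<in>hull_vertices P. y \<noteq> x \<longrightarrow> lexless x y"
    using lex_least_exists[OF finite_hull_vertices hull_vertices_nonempty] assms by blast
  then have "leftmost P = x" unfolding leftmost_def by (rule the_lex_least)
  with x show "leftmost P \<in> hull_vertices P" "\<forall>y\<in>hull_vertices P. y \<noteq> leftmost P \<longrightarrow> lexless (leftmost P) y"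
    by simp_all
qed

lemma rightmost:
  assumes "finite P" "P \<noteq> {}"
  shows "rightmost P \<in> hull_vertices P" "\<forall>y\<in>hull_vertices P. y \<noteq> rightmost P \<longrightarrow> lexless y (rightmost P)"
proof -
  obtain x where x: "x \<in> hull_vertices P" "\<forall>y\<in>hull_vertices P. y \<noteq> x \<longrightarrow> lexless y x"
    using lex_greatest_exists[OF finite_hull_vertices hull_vertices_nonempty] assms by blast
  then have "rightmost P = x" unfolding rightmost_def by (rule the_lex_greatest)
  with x show "rightmost P \<in> hull_vertices P" "\<forall>y\<in>hull_vertices P. y \<noteq> rightmost P \<longrightarrow> lexless y (rightmost P)"
    by simp_all
qed

lemma leftmost_uminus:
  assumes "finite P" "P \<noteq> {}"
  shows "leftmost (uminus ` P) = - rightmost P"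
  unfolding leftmost_def
proof (rule the_lex_least)
  show "- rightmost P \<in> hull_vertices (uminus ` P)"
    using rightmost(1)[OF assms] by (simp add: hull_vertices_uminus)
  show "\<forall>y\<in>hull_vertices (uminus ` P). y \<noteq> - rightmost P \<longrightarrow> lexless (- rightmost P) y"
    using rightmost(2)[OF assms] by (auto simp: hull_vertices_uminus)
qed

lemma rightmost_uminus:
  assumes "finite P" "P \<noteq> {}"
  shows "rightmost (uminus ` P) = - leftmost P"
  unfolding rightmost_def
proof (rule the_lex_greatest)
  show "- leftmost P \<in> hull_vertices (uminus ` P)"
    using leftmost(1)[OF assms] by (simp add: hull_vertices_uminus)
  show "\<forall>y\<in>hull_vertices (uminus ` P). y \<noteq> - leftmost P \<longrightarrow> lexless y (- leftmost P)"
    using leftmost(2)[OF assms] by (auto simp: hull_vertices_uminus)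
qed

lemma lexless_imp_fst_le: "lexless a b \<Longrightarrow> fst a \<le> fst b"
  by (auto simp: lexless_def)

lemma lexless_imp_snd_less: "lexless a b \<Longrightarrow> fst a = fst b \<Longrightarrow> snd a < snd b"
  by (auto simp: lexless_def)

lemma closed_segment_vertical:
  fixes p b r :: pt
  assumes "fst p = fst b" "fst r = fst b" "snd p \<le> snd b" "snd b \<le> snd r"
  shows "b \<in> closed_segment p r"
proof (cases "snd p = snd r")
  case True
  then have "b = p" using assms by (simp add: prod_eq_iff)
  then show ?thesis by simp
next
  case False
  define u where "u = (snd b - snd p) / (snd r - snd p)"
  have "snd p < snd r" using False assms by simp
  then have "0 \<le> u" "u \<le> 1" using assms by (simp_all add: u_def divide_simps)
  moreover have "u * (snd r - snd p) = snd b - snd p" using \<open>snd p < snd r\<close> by (simp add: u_def)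
  then have "b = (1 - u) *\<^sub>R p + u *\<^sub>R r"
    using assms(1,2) by (simp add: prod_eq_iff algebra_simps)
  ultimately show ?thesis unfolding in_segment by blast
qed

lemma closed_segment_at_abscissa:
  fixes a c b :: pt
  assumes "fst a < fst c" "fst a \<le> fst b" "fst b \<le> fst c"
  obtains p where "p \<in> closed_segment a c" "fst p = fst b"
    "(fst c - fst a) * (snd b - snd p) = cross2 (c - a) (b - a)"
proof -
  define u where "u = (fst b - fst a) / (fst c - fst a)"
  define p where "p = (1 - u) *\<^sub>R a + u *\<^sub>R c"
  have "0 \<le> u" "u \<le> 1" using assms by (simp_all add: u_def divide_simps)
  then have "p \<in> closed_segment a c" unfolding in_segment p_def by blast
  have "u * (fst c - fst a) = fst b - fst a" using assms(1) by (simp add: u_def)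
  then have "fst p = fst b" by (simp add: p_def algebra_simps)
  have "p - a = u *\<^sub>R (c - a)" by (simp add: p_def algebra_simps)
  then have "cross2 (c - a) (p - a) = 0" by simp
  moreover have "cross2 (c - a) (b - a) = cross2 (c - a) (b - p) + cross2 (c - a) (p - a)"
    by (simp add: cross2_def algebra_simps)
  moreover have "cross2 (c - a) (b - p) = (fst c - fst a) * (snd b - snd p)"
    using \<open>fst p = fst b\<close> by (simp add: cross2_def algebra_simps)
  ultimately have "(fst c - fst a) * (snd b - snd p) = cross2 (c - a) (b - a)" by linarith
  with \<open>p \<in> closed_segment a c\<close> \<open>fst p = fst b\<close> show thesis by (rule that)
qed

lemma below_chord_in_hull:
  assumes "fst v \<le> fst a" "lexless a b" "lexless b c" "fst c \<le> fst v'"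
    and "cross2 (v' - v) (b - v) > 0" "cross2 (b - a) (c - b) \<ge> 0"
  shows "b \<in> convex hull {v, v', a, c}"
proof -
  let ?K = "convex hull {v, v', a, c}"
  have "closed_segment v v' \<subseteq> ?K" "closed_segment a c \<subseteq> ?K"
    unfolding segment_convex_hull by (intro hull_mono; simp)+
  have ab: "fst a \<le> fst b" and bc: "fst b \<le> fst c" using assms(2,3) by (simp_all add: lexless_imp_fst_le)
  have "\<exists>p\<in>?K. fst p = fst b \<and> snd p \<le> snd b"
  proof (cases "fst a = fst b")
    case True
    then show ?thesis using lexless_imp_snd_less[OF assms(2)] by (intro bexI[of _ a]) (simp_all add: hull_inc)
  next
    case False
    then have "fst v < fst v'" "fst v \<le> fst b" "fst b \<le> fst v'" using assms(1,4) ab bc by linarith+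
    then obtain p where "p \<in> closed_segment v v'" "fst p = fst b"
      and "(fst v' - fst v) * (snd b - snd p) = cross2 (v' - v) (b - v)"
      by (rule closed_segment_at_abscissa)
    moreover from this(3) assms(5) have "(fst v' - fst v) * (snd b - snd p) > 0" by linarith
    with \<open>fst v < fst v'\<close> have "snd p \<le> snd b" by (simp add: zero_less_mult_iff)
    ultimately show ?thesis using \<open>closed_segment v v' \<subseteq> ?K\<close> by blast
  qed
  moreover have "\<exists>r\<in>?K. fst r = fst b \<and> snd b \<le> snd r"
  proof (cases "fst b = fst c")
    case True
    then show ?thesis using lexless_imp_snd_less[OF assms(3)] by (intro bexI[of _ c]) (simp_all add: hull_inc)
  next
    case False
    then have "fst a < fst c" using ab bc by linarith
    then obtain r where "r \<in> closed_segment a c" "fst r = fst b"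
      and "(fst c - fst a) * (snd b - snd r) = cross2 (c - a) (b - a)"
      using ab bc by (rule closed_segment_at_abscissa)
    moreover have "cross2 (c - a) (b - a) = - cross2 (b - a) (c - b)" by (simp add: cross2_def algebra_simps)
    ultimately have "(fst c - fst a) * (snd b - snd r) \<le> 0" using assms(6) by linarith
    with \<open>fst a < fst c\<close> have "snd b \<le> snd r" by (simp add: mult_le_0_iff)
    with \<open>r \<in> closed_segment a c\<close> \<open>fst r = fst b\<close> show ?thesis
      using \<open>closed_segment a c \<subseteq> ?K\<close> by blast
  qed
  ultimately obtain p r where "p \<in> ?K" "r \<in> ?K" "b \<in> closed_segment p r"
    using closed_segment_vertical by meson
  then show ?thesis using closed_segment_subset[OF _ _ convex_convex_hull] by blast
qed

lemma collinear_lex_between_in_segment: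
  assumes "lexless v u" "lexless u v'" "cross2 (v' - v) (u - v) = 0"
  shows "u \<in> closed_segment v v'"
proof -
  have "fst v \<le> fst u" "fst u \<le> fst v'" using assms(1,2) by (simp_all add: lexless_imp_fst_le)
  show ?thesis
  proof (cases "fst v = fst v'")
    case True
    with \<open>fst v \<le> fst u\<close> \<open>fst u \<le> fst v'\<close> have "fst v = fst u" "fst v' = fst u" by simp_all
    with assms(1,2) show ?thesis
      by (intro closed_segment_vertical less_imp_le lexless_imp_snd_less) simp_all
  next
    case False
    with \<open>fst v \<le> fst u\<close> \<open>fst u \<le> fst v'\<close> have "fst v < fst v'" by simp
    then obtain p where "p \<in> closed_segment v v'" "fst p = fst u"
      "(fst v' - fst v) * (snd u - snd p) = cross2 (v' - v) (u - v)"
      using \<open>fst v \<le> fst u\<close> \<open>fst u \<le> fst v'\<close> by (rule closed_segment_at_abscissa)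
    moreover from this assms(3) \<open>fst v < fst v'\<close> have "u = p" by (simp add: prod_eq_iff)
    ultimately show ?thesis by simp
  qed
qed

definition upper_vertices :: "pt set \<Rightarrow> pt set" where
  "upper_vertices P = {u \<in> hull_vertices P. u = leftmost P \<or> u = rightmost P \<or>
     cross2 (rightmost P - leftmost P) (u - leftmost P) > 0}"

lemma upper_chain_sorted:
  assumes "finite P"
  shows "sorted_wrt lexless (upper_chain P)" "set (upper_chain P) = upper_vertices P"
proof -
  have "finite (upper_vertices P)"
    using finite_hull_vertices[OF assms] by (simp add: upper_vertices_def)
  then have "\<exists>!w. sorted_wrt lexless w \<and> set w = upper_vertices P" by (rule ex1_lex_sorted_list)
  then have "sorted_wrt lexless (upper_chain P) \<and> set (upper_chain P) = upper_vertices P"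
    unfolding upper_chain_def upper_vertices_def[symmetric] by (rule theI')
  then show "sorted_wrt lexless (upper_chain P)" "set (upper_chain P) = upper_vertices P" by simp_all
qed

lemma upper_chain_subset: "finite P \<Longrightarrow> set (upper_chain P) \<subseteq> hull_vertices P"
  by (simp add: upper_chain_sorted upper_vertices_def)

lemma upper_chain_first:
  assumes "finite P" "P \<noteq> {}"
  shows "upper_chain P ! 0 = leftmost P"
  using leftmost[OF assms] upper_chain_subset[OF assms(1)]
  by (intro lex_sorted_nth_0[OF upper_chain_sorted(1)[OF assms(1)]])
    (auto simp: upper_chain_sorted[OF assms(1)] upper_vertices_def)

lemma upper_chain_last:
  assumes "finite P" "P \<noteq> {}"
  shows "upper_chain P ! (length (upper_chain P) - 1) = rightmost P"
  using rightmost[OF assms] upper_chain_subset[OF assms(1)]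
  by (intro lex_sorted_nth_last[OF upper_chain_sorted(1)[OF assms(1)]])
    (auto simp: upper_chain_sorted[OF assms(1)] upper_vertices_def)

lemma length_upper_chain_le:
  assumes "finite P"
  shows "length (upper_chain P) \<le> card P"
proof -
  have "distinct (upper_chain P)"
    using upper_chain_sorted(1)[OF assms] linorder.strict_sorted_iff[OF class_linorder_lexless] by blast
  then have "length (upper_chain P) = card (set (upper_chain P))" by (simp add: distinct_card)
  also have "\<dots> \<le> card P"
    using upper_chain_subset[OF assms] hull_vertices_subset assms by (intro card_mono) auto
  finally show ?thesis .
qed

lemma upper_chain_turns_clockwise:
  assumes "finite P" "P \<noteq> {}" "1 \<le> t" "Suc t < length (upper_chain P)"
  shows "cross2 (edge (upper_chain P) t) (edge (upper_chain P) (Suc t)) < 0"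
proof (rule ccontr)
  let ?w = "upper_chain P" and ?v = "leftmost P" and ?v' = "rightmost P"
  let ?a = "?w ! (t - 1)" and ?b = "?w ! t" and ?c = "?w ! Suc t"
  assume "\<not> cross2 (edge ?w t) (edge ?w (Suc t)) < 0"
  then have turn: "cross2 (?b - ?a) (?c - ?b) \<ge> 0" by (simp add: edge_def)
  note sorted = sorted_wrt_nth_less[OF upper_chain_sorted(1)[OF assms(1)]]
  have ab: "lexless ?a ?b" and bc: "lexless ?b ?c" using sorted assms(3,4) by simp_all
  have "lexless ?v ?b" "lexless ?b ?v'"
    using sorted[of 0 t] sorted[of t "length ?w - 1"] assms(3,4)
      upper_chain_first[OF assms(1,2)] upper_chain_last[OF assms(1,2)] by simp_all
  then have "?b \<noteq> ?v" "?b \<noteq> ?v'" by auto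
  have abc: "?a \<in> hull_vertices P" "?b \<in> hull_vertices P" "?c \<in> hull_vertices P"
    using upper_chain_subset[OF assms(1)] assms(4) by (auto intro!: nth_mem)
  have "?b \<in> upper_vertices P" using upper_chain_sorted(2)[OF assms(1)] assms(4) by (auto intro!: nth_mem)
  then have above: "cross2 (?v' - ?v) (?b - ?v) > 0"
    using \<open>?b \<noteq> ?v\<close> \<open>?b \<noteq> ?v'\<close> by (simp add: upper_vertices_def)
  have "fst ?v \<le> fst ?a" "fst ?c \<le> fst ?v'"
    using leftmost(2)[OF assms(1,2)] rightmost(2)[OF assms(1,2)] abc lexless_imp_fst_le
    by (metis order_refl)+
  then have "?b \<in> convex hull {?v, ?v', ?a, ?c}"
    using below_chord_in_hull ab bc above turn by blast
  moreover have "{?v, ?v', ?a, ?c} \<subseteq> P"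
    using abc leftmost(1)[OF assms(1,2)] rightmost(1)[OF assms(1,2)] hull_vertices_subset by auto
  ultimately have "?b \<in> {?v, ?v', ?a, ?c}" using hull_vertex_in_subset[OF abc(2)] by blast
  then show False using \<open>?b \<noteq> ?v\<close> \<open>?b \<noteq> ?v'\<close> ab bc by auto
qed

lemma convex_chain_upper_chain:
  assumes "finite P" "P \<noteq> {}"
  shows "convex_chain (upper_chain P)"
proof (rule convex_chainI)
  fix t assume "1 \<le> t" "t < length (upper_chain P)"
  then show "lexless 0 (edge (upper_chain P) t)"
    using sorted_wrt_nth_less[OF upper_chain_sorted(1)[OF assms(1)], of "t - 1" t] by (simp add: edge_def)
qed (rule upper_chain_turns_clockwise[OF assms])

lemma hull_vertices_subset_upper_chains:
  assumes "finite P" "P \<noteq> {}"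
  shows "hull_vertices P \<subseteq> set (upper_chain P) \<union> uminus ` set (upper_chain (uminus ` P))"
proof
  fix u assume u: "u \<in> hull_vertices P"
  let ?v = "leftmost P" and ?v' = "rightmost P"
  have fin: "finite (uminus ` P)" using assms(1) by simp
  consider "u = ?v \<or> u = ?v' \<or> cross2 (?v' - ?v) (u - ?v) > 0" | "cross2 (?v' - ?v) (u - ?v) < 0"
    | "u \<noteq> ?v" "u \<noteq> ?v'" "cross2 (?v' - ?v) (u - ?v) = 0"
    by linarith
  then show "u \<in> set (upper_chain P) \<union> uminus ` set (upper_chain (uminus ` P))"
  proof cases
    case 1
    then show ?thesis using u by (simp add: upper_chain_sorted[OF assms(1)] upper_vertices_def)
  next
    case 2
    have "cross2 (rightmost (uminus ` P) - leftmost (uminus ` P)) (- u - leftmost (uminus ` P))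
        = - cross2 (?v' - ?v) (u - ?v)"
      unfolding leftmost_uminus[OF assms] rightmost_uminus[OF assms] by (simp add: cross2_def algebra_simps)
    with 2 have "- u \<in> upper_vertices (uminus ` P)"
      using u by (simp add: upper_vertices_def hull_vertices_uminus)
    then show ?thesis
      by (simp add: upper_chain_sorted[OF fin] mem_uminus_image_iff)
  next
    case 3
    then have "lexless ?v u" "lexless u ?v'" using leftmost[OF assms] rightmost[OF assms] u by auto
    then have "u \<in> convex hull {?v, ?v'}"
      using 3(3) collinear_lex_between_in_segment segment_convex_hull by blast
    moreover have "{?v, ?v'} \<subseteq> P"
      using leftmost(1)[OF assms] rightmost(1)[OF assms] hull_vertices_subset by auto
    ultimately have "u \<in> {?v, ?v'}" using hull_vertex_in_subset[OF u] by blast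
    then show ?thesis using 3 by simp
  qed
qed

lemma upper_chain_nonempty:
  assumes "finite P" "P \<noteq> {}"
  shows "upper_chain P \<noteq> []"
proof -
  have "leftmost P \<in> set (upper_chain P)"
    using leftmost(1)[OF assms] by (simp add: upper_chain_sorted[OF assms(1)] upper_vertices_def)
  then show ?thesis by auto
qed

lemma upper_part_Some:
  assumes "finite P" "P \<noteq> {}" "snd (upper_part inC P) = Some p"
  shows "p \<in> P \<and> \<not> inC p"
proof -
  have "length (upper_chain P) - 1 < length (upper_chain P)"
    using upper_chain_nonempty[OF assms(1,2)] by simp
  then have "p \<in> set (upper_chain P) \<and> \<not> inC p"
    using assms(3) unfolding upper_part_def by (rule rec_call_Some[OF order_refl])
  then show ?thesis using upper_chain_subset[OF assms(1)] hull_vertices_subset by blast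
qed

lemma upper_part_None:
  assumes "convex {x. inC x}" "finite P" "P \<noteq> {}" "inC (leftmost P)" "inC (rightmost P)"
    and "snd (upper_part inC P) = None"
  shows "\<forall>u\<in>set (upper_chain P). inC u"
proof
  fix u assume "u \<in> set (upper_chain P)"
  then obtain t where t: "t < length (upper_chain P)" and u: "u = upper_chain P ! t"
    by (auto simp: in_set_conv_nth)
  have "inC (upper_chain P ! t)"
    using assms(4-6) t upper_chain_first[OF assms(2,3)] upper_chain_last[OF assms(2,3)]
    by (intro rec_call_None[OF assms(1) convex_chain_upper_chain[OF assms(2,3)], of 1 "length (upper_chain P) - 1" t])
      (auto simp: upper_part_def)
  then show "inC u" using u by simp
qed

lemma length_upper_part:
  assumes "finite V" "convex hull V \<subseteq> {x. inC x}" "\<forall>p\<in>P. inC p \<longrightarrow> p \<in> convex hull V"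
    and "finite P" "P \<noteq> {}" "inC (leftmost P)" "inC (rightmost P)" "card P \<le> 2 ^ h"
  shows "length (fst (upper_part inC P)) \<le> 3 + 6 * card V * h"
proof -
  let ?w = "upper_chain P"
  have "\<forall>t<length ?w. inC (?w ! t) \<longrightarrow> ?w ! t \<in> convex hull V"
    using assms(3) upper_chain_subset[OF assms(4)] hull_vertices_subset nth_mem by blast
  moreover have "length ?w - 1 - 1 \<le> 2 ^ h"
    using length_upper_chain_le[OF assms(4)] assms(8) by linarith
  ultimately have "length (fst (upper_part inC P)) \<le> 3 + 6 * card (charged V ?w 1 (length ?w - 1)) * h"
    using assms upper_chain_nonempty[OF assms(4,5)] upper_chain_first[OF assms(4,5)] upper_chain_last[OF assms(4,5)]
    unfolding upper_part_def
    by (intro length_rec_call_charged[OF convex_chain_upper_chain[OF assms(4,5)] assms(1,2)]) auto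
  also have "\<dots> \<le> 3 + 6 * card V * h"
    using assms(1) by (simp add: card_mono charged_def)
  finally show ?thesis .
qed

lemma lower_part_eq:
  "lower_part inC P = (map uminus (fst (upper_part (\<lambda>q. inC (- q)) (uminus ` P))),
     map_option uminus (snd (upper_part (\<lambda>q. inC (- q)) (uminus ` P))))"
  by (simp add: lower_part_def split: prod.split)

lemma convex_uminus_Collect:
  assumes "convex {x. inC x}"
  shows "convex {x :: pt. inC (- x)}"
proof -
  have "{x :: pt. inC (- x)} = uminus ` {x. inC x}" by (auto simp: mem_uminus_image_iff)
  then show ?thesis using convex_linear_image[OF linear_uminus assms] by simp
qed

lemma lower_part_Some:
  assumes "finite P" "P \<noteq> {}" "snd (lower_part inC P) = Some p"
  shows "p \<in> P \<and> \<not> inC p"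
  using assms upper_part_Some[of "uminus ` P" "\<lambda>q. inC (- q)" "- p"]
  by (auto simp: lower_part_eq mem_uminus_image_iff)

lemma lower_part_None:
  assumes "convex {x. inC x}" "finite P" "P \<noteq> {}" "inC (leftmost P)" "inC (rightmost P)"
    and "snd (lower_part inC P) = None"
  shows "\<forall>u\<in>uminus ` set (upper_chain (uminus ` P)). inC u"
  using assms upper_part_None[OF convex_uminus_Collect[OF assms(1)], of "uminus ` P"]
  by (auto simp: lower_part_eq leftmost_uminus rightmost_uminus)

lemma length_lower_part:
  assumes "finite V" "convex hull V \<subseteq> {x. inC x}" "\<forall>p\<in>P. inC p \<longrightarrow> p \<in> convex hull V"
    and "finite P" "P \<noteq> {}" "inC (leftmost P)" "inC (rightmost P)" "card P \<le> 2 ^ h"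
  shows "length (fst (lower_part inC P)) \<le> 3 + 6 * card V * h"
proof -
  have hull: "convex hull (uminus ` V) = uminus ` (convex hull V)"
    by (rule convex_hull_linear_image[OF linear_uminus, symmetric])
  have "convex hull (uminus ` V) \<subseteq> {x. inC (- x)}"
    using assms(2) by (auto simp: hull mem_uminus_image_iff)
  moreover have "\<forall>p\<in>uminus ` P. inC (- p) \<longrightarrow> p \<in> convex hull (uminus ` V)"
    using assms(3) by (auto simp: hull mem_uminus_image_iff)
  moreover have "card (uminus ` P) \<le> 2 ^ h" using assms(8) card_image_le[OF assms(4), of uminus] by linarith
  ultimately have "length (fst (upper_part (\<lambda>q. inC (- q)) (uminus ` P))) \<le> 3 + 6 * card (uminus ` V) * h"
    using assms(1,4-7) by (intro length_upper_part) (auto simp: leftmost_uminus rightmost_uminus)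
  moreover have "card (uminus ` V) = card V" by (rule card_image) (simp add: inj_on_def)
  ultimately show ?thesis by (simp add: lower_part_eq)
qed

definition initial_queries :: "pt set \<Rightarrow> pt list" where
  "initial_queries P = [leftmost P, rightmost P] @ end_nbrs (upper_chain P)
     @ map uminus (end_nbrs (upper_chain (uminus ` P)))"

lemma length_initial_queries: "length (initial_queries P) \<le> 6"
  by (simp add: initial_queries_def end_nbrs_def)

lemma initial_queries_subset:
  assumes "finite P" "P \<noteq> {}"
  shows "set (initial_queries P) \<subseteq> P"
proof -
  have nbrs: "set (end_nbrs w) \<subseteq> set w" for w by (auto simp: end_nbrs_def)
  have chain: "set (upper_chain Q) \<subseteq> Q" if "finite Q" for Q
    using upper_chain_subset[OF that] hull_vertices_subset by blast
  have "set (end_nbrs (upper_chain P)) \<subseteq> P" using nbrs chain[OF assms(1)] by blast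
  moreover have "set (end_nbrs (upper_chain (uminus ` P))) \<subseteq> uminus ` P"
    using nbrs chain[of "uminus ` P"] assms(1) by blast
  then have "uminus ` set (end_nbrs (upper_chain (uminus ` P))) \<subseteq> P"
    by (auto simp: mem_uminus_image_iff)
  moreover have "leftmost P \<in> P" "rightmost P \<in> P"
    using leftmost(1)[OF assms] rightmost(1)[OF assms] hull_vertices_subset by auto
  ultimately show ?thesis by (simp add: initial_queries_def)
qed

lemma find_Some_imp: "find Q xs = Some x \<Longrightarrow> x \<in> set xs \<and> Q x"
  by (induction xs) (auto split: if_splits)

lemma length_classify_le:
  "length (fst (classify C P)) \<le> 6 +
     (if set (initial_queries P) \<subseteq> C
      then length (fst (upper_part (\<lambda>q. q \<in> C) P)) + length (fst (lower_part (\<lambda>q. q \<in> C) P))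
      else 0)"
  using length_initial_queries[of P]
  unfolding classify_def Let_def initial_queries_def[symmetric]
  by (auto simp: find_None_iff dest: find_Some_imp split: option.splits prod.splits)

lemma classify_Some:
  assumes "snd (classify C P) = Some p"
  shows "p \<in> set (initial_queries P) \<and> p \<notin> C \<or> snd (upper_part (\<lambda>q. q \<in> C) P) = Some p
    \<or> snd (lower_part (\<lambda>q. q \<in> C) P) = Some p"
  using assms unfolding classify_def Let_def initial_queries_def[symmetric]
  by (auto dest: find_Some_imp split: option.splits prod.splits)

lemma classify_None:
  assumes "snd (classify C P) = None"
  shows "set (initial_queries P) \<subseteq> C \<and> snd (upper_part (\<lambda>q. q \<in> C) P) = None
    \<and> snd (lower_part (\<lambda>q. q \<in> C) P) = None"
  using assms unfolding classify_def Let_def initial_queries_def[symmetric]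
  by (auto simp: find_None_iff split: option.splits prod.splits)

theorem classify_correct:
  assumes "convex C" "finite P" "P \<noteq> {}"
  shows "case snd (classify C P) of None \<Rightarrow> P \<subseteq> C | Some p \<Rightarrow> p \<in> P \<and> p \<notin> C"
proof (cases "snd (classify C P)")
  case (Some p)
  have "p \<in> P \<and> p \<notin> C"
    using classify_Some[OF Some] initial_queries_subset[OF assms(2,3)]
      upper_part_Some[OF assms(2,3), of "\<lambda>q. q \<in> C"] lower_part_Some[OF assms(2,3), of "\<lambda>q. q \<in> C"]
    by blast
  then show ?thesis using Some by simp
next
  case None
  note none = classify_None[OF None]
  have conv: "convex {x. x \<in> C}" using assms(1) by simp
  have ends: "leftmost P \<in> C" "rightmost P \<in> C" using none by (auto simp: initial_queries_def)
  have "hull_vertices P \<subseteq> C"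
    using hull_vertices_subset_upper_chains[OF assms(2,3)] none
      upper_part_None[OF conv assms(2,3)] lower_part_None[OF conv assms(2,3)] ends by blast
  then have "convex hull (hull_vertices P) \<subseteq> C" using assms(1) by (rule hull_minimal)
  then have "convex hull P \<subseteq> C" by (simp add: convex_hull_hull_vertices[OF assms(2)])
  then show ?thesis using None hull_subset[of P convex] by auto
qed

lemma inner_fence_exists:
  assumes "convex C" "finite P"
  shows "\<exists>V. finite V \<and> card V = inner_fence_size C P \<and> convex hull V \<subseteq> C \<and> C \<inter> P = convex hull V \<inter> P"
proof -
  let ?fence = "\<lambda>k. \<exists>V. finite V \<and> card V = k \<and> convex hull V \<subseteq> C \<and> C \<inter> P = convex hull V \<inter> P"
  have "convex hull (C \<inter> P) \<subseteq> C" using assms(1) by (intro hull_minimal) auto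
  moreover have "C \<inter> P \<subseteq> convex hull (C \<inter> P)" by (rule hull_subset)
  ultimately have "?fence (card (C \<inter> P))" using assms(2) by blast
  then have "?fence (LEAST k. ?fence k)" by (rule LeastI)
  then show ?thesis unfolding inner_fence_size_def .
qed

lemma length_classify_le_fence:
  assumes "convex C" "finite P" "P \<noteq> {}" "card P \<le> 2 ^ h"
  shows "length (fst (classify C P)) \<le> 12 + 12 * inner_fence_size C P * h"
proof -
  obtain V where V: "finite V" "card V = inner_fence_size C P" "convex hull V \<subseteq> {x. x \<in> C}"
    "\<forall>p\<in>P. p \<in> C \<longrightarrow> p \<in> convex hull V"
    using inner_fence_exists[OF assms(1,2)] by auto
  have "length (fst (upper_part (\<lambda>q. q \<in> C) P)) + length (fst (lower_part (\<lambda>q. q \<in> C) P))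
      \<le> 6 + 12 * inner_fence_size C P * h" if "set (initial_queries P) \<subseteq> C"
  proof -
    have "leftmost P \<in> C" "rightmost P \<in> C" using that by (auto simp: initial_queries_def)
    then show ?thesis
      using length_upper_part[OF V(1,3,4) assms(2,3)] length_lower_part[OF V(1,3,4) assms(2,3)] assms(4) V(2)
      by fastforce
  qed
  then show ?thesis using length_classify_le[of C P] by (auto split: if_splits)
qed

lemma pow2_ceiling_log:
  assumes "1 \<le> n"
  shows "\<exists>h. n \<le> 2 ^ h \<and> real h \<le> log 2 (real n) + 1"
proof -
  define h where "h = nat \<lceil>log 2 (real n)\<rceil>"
  have h: "real h = of_int \<lceil>log 2 (real n)\<rceil>" using assms by (simp add: h_def)
  have "real n = 2 powr (log 2 (real n))" using assms by simp
  also have "\<dots> \<le> 2 powr (real h)" unfolding h by (intro powr_mono) (auto intro: le_of_int_ceiling)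
  finally have "n \<le> 2 ^ h" by (simp add: powr_realpow flip: of_nat_le_iff)
  moreover have "real h \<le> log 2 (real n) + 1" unfolding h by (rule of_int_ceiling_le_add_one)
  ultimately show ?thesis by blast
qed

theorem lemma4p4:
  "\<exists>c::real. c > 0 \<and>
     (\<forall>C P. convex_body C \<and> finite P \<and> P \<noteq> {} \<longrightarrow>
        real (length (fst (classify C P)))
          \<le> c * (real (inner_fence_size C P) + 1) * (log 2 (real (card P)) + 1)
        \<and> (case snd (classify C P) of
             None \<Rightarrow> P \<subseteq> C
           | Some p \<Rightarrow> p \<in> P \<and> p \<notin> C))"
proof (intro exI[of _ 12] conjI allI impI)
  fix C P :: "pt set" assume "convex_body C \<and> finite P \<and> P \<noteq> {}"
  then have C: "convex C" and P: "finite P" "P \<noteq> {}" by (auto simp: convex_body_def)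
  then show "case snd (classify C P) of None \<Rightarrow> P \<subseteq> C | Some p \<Rightarrow> p \<in> P \<and> p \<notin> C"
    by (rule classify_correct)
  obtain h where h: "card P \<le> 2 ^ h" "real h \<le> log 2 (real (card P)) + 1"
    using pow2_ceiling_log[of "card P"] P by (auto simp: Suc_le_eq card_gt_0_iff)
  have "log 2 (real (card P)) \<ge> 0" using P by (simp add: Suc_le_eq card_gt_0_iff)
  let ?F = "real (inner_fence_size C P)" and ?L = "log 2 (real (card P)) + 1"
  have "real (length (fst (classify C P))) \<le> real (12 + 12 * inner_fence_size C P * h)"
    using length_classify_le_fence[OF C P h(1)] by (simp only: of_nat_le_iff)
  also have "\<dots> = 12 + 12 * ?F * real h" by simp
  also have "\<dots> \<le> 12 * (?F + 1) * ?L"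
    using h(2) \<open>log 2 (real (card P)) \<ge> 0\<close> mult_left_mono[OF h(2), of "12 * ?F"]
    by (simp add: algebra_simps)
  finally show "real (length (fst (classify C P))) \<le> 12 * (?F + 1) * ?L" .
qed simp

end
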